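(* For every nontrivial finite group $G$, $\beta(G)\ge\beta_{\mathrm g}(G)$. Moreover, there exist finite groups $G$ with $\beta(G)>\beta_{\mathrm g}(G)$.
   Context: For a nonempty subset $X$ of a group $G$, $Q(X):=\{xy^{-1}: x,y\in X\}$. Nonempty subsets $S_1,S_2,S_3$ of $G$ satisfy the Triple Product Property (TPP) if for all $s_i\in Q(S_i)$: $s_1s_2s_3=1$ iff $s_1=s_2=s_3=1$. A group $G$ realizes $\langle n,p,m\rangle$ if there are subsets $S_1,S_2,S_3\subseteq G$ with $|S_1|=n$, $|S_2|=p$, $|S_3|=m$ satisfying the TPP; it realizes it through subgroups if the $S_i$ can be chosen to be subgroups. For a nontrivial finite group $G$, the TPP capacity is $\beta(G):=\max\{npm : G \text{ realizes } \langle n,p,m\rangle\}$ and the TPP subgroup capacity is $\beta_{\mathrm g}(G):=\max\{npm : G \text{ realizes } \langle n,p,m\rangle \text{ through subgroups}\}$. *)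

theory Defs
  imports "HOL-Algebra.Group"
begin

definition quot_set :: "('a, 'b) monoid_scheme \<Rightarrow> 'a set \<Rightarrow> 'a set" where
  "quot_set G X = {x \<otimes>\<^bsub>G\<^esub> inv\<^bsub>G\<^esub> y | x y. x \<in> X \<and> y \<in> X}"

definition TPP :: "('a, 'b) monoid_scheme \<Rightarrow> 'a set \<Rightarrow> 'a set \<Rightarrow> 'a set \<Rightarrow> bool" where
  "TPP G S1 S2 S3 \<longleftrightarrow>
     S1 \<subseteq> carrier G \<and> S2 \<subseteq> carrier G \<and> S3 \<subseteq> carrier G \<and>
     S1 \<noteq> {} \<and> S2 \<noteq> {} \<and> S3 \<noteq> {} \<and>
     (\<forall>s1\<in>quot_set G S1. \<forall>s2\<in>quot_set G S2. \<forall>s3\<in>quot_set G S3.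
        (s1 \<otimes>\<^bsub>G\<^esub> s2 \<otimes>\<^bsub>G\<^esub> s3 = \<one>\<^bsub>G\<^esub>
          \<longleftrightarrow> s1 = \<one>\<^bsub>G\<^esub> \<and> s2 = \<one>\<^bsub>G\<^esub> \<and> s3 = \<one>\<^bsub>G\<^esub>))"

definition realizes :: "('a, 'b) monoid_scheme \<Rightarrow> nat \<Rightarrow> nat \<Rightarrow> nat \<Rightarrow> bool" where
  "realizes G n p m \<longleftrightarrow> (\<exists>S1 S2 S3. TPP G S1 S2 S3 \<and>
      card S1 = n \<and> card S2 = p \<and> card S3 = m)"

definition realizes_subgroups :: "('a, 'b) monoid_scheme \<Rightarrow> nat \<Rightarrow> nat \<Rightarrow> nat \<Rightarrow> bool" where
  "realizes_subgroups G n p m \<longleftrightarrow> (\<exists>S1 S2 S3. TPP G S1 S2 S3 \<and>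
      subgroup S1 G \<and> subgroup S2 G \<and> subgroup S3 G \<and>
      card S1 = n \<and> card S2 = p \<and> card S3 = m)"

definition TPP_capacity :: "('a, 'b) monoid_scheme \<Rightarrow> nat" where
  "TPP_capacity G = Max {n * p * m | n p m. realizes G n p m}"

definition TPP_subgroup_capacity :: "('a, 'b) monoid_scheme \<Rightarrow> nat" where
  "TPP_subgroup_capacity G = Max {n * p * m | n p m. realizes_subgroups G n p m}"

end

theory Submission
  imports Defs "HOL-Algebra.Coset"
begin

text \<open>Realizing \<open>\<langle>n, p, m\<rangle>\<close> through subgroups is a special case of realizing it, and both
  maxima exist because the trivial subgroups realize \<open>\<langle>1, 1, 1\<rangle>\<close> and every \<open>|S\<^sub>i|\<close> is at most
  \<open>|G|\<close>; hence \<open>\<beta>\<^sub>g(G) \<le> \<beta>(G)\<close>.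
  For the strict inequality take the dicyclic group \<open>Dic\<^sub>3\<close>, the semidirect product of \<open>C\<^sub>3\<close>
  by \<open>C\<^sub>4\<close> acting through inversion.
  Three explicit subsets realize \<open>\<langle>2, 2, 4\<rangle>\<close>, so \<open>\<beta>(Dic\<^sub>3) \<ge> 16\<close>. On the other hand the
  TPP forces \<open>|S\<^sub>i| |S\<^sub>j| \<le> |G|\<close> (the map \<open>(a, b) \<mapsto> a\<inverse>b\<close> is injective on \<open>S\<^sub>i \<times> S\<^sub>j\<close>), and three
  subgroups with the TPP intersect pairwise trivially. Every nontrivial subgroup of \<open>Dic\<^sub>3\<close> contains
  the unique involution or the unique subgroup of order 3, so one of the three subgroups is trivial
  and \<open>\<beta>\<^sub>g(Dic\<^sub>3) \<le> 12\<close>.\<close>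

lemma quot_setI: "x \<in> S \<Longrightarrow> y \<in> S \<Longrightarrow> x \<otimes>\<^bsub>G\<^esub> inv\<^bsub>G\<^esub> y \<in> quot_set G S"
  unfolding quot_set_def by blast

lemma quot_set_eq_image: "quot_set G S = (\<lambda>(x, y). x \<otimes>\<^bsub>G\<^esub> inv\<^bsub>G\<^esub> y) ` (S \<times> S)"
  unfolding quot_set_def by auto

lemma (in group) one_in_quot_set: "x \<in> S \<Longrightarrow> S \<subseteq> carrier G \<Longrightarrow> \<one> \<in> quot_set G S"
  using quot_setI[of x S x G] by auto

lemma (in group) quot_set_subset_carrier: "S \<subseteq> carrier G \<Longrightarrow> quot_set G S \<subseteq> carrier G"
  unfolding quot_set_def by auto

lemma (in group) subgroup_subset_quot_set: "subgroup H G \<Longrightarrow> H \<subseteq> quot_set G H"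
  using quot_setI[of _ H \<one> G] subgroup.one_closed subgroup.subset by fastforce

lemma (in group) TPP_pair_trivial:
  assumes "TPP G S1 S2 S3"
  shows "a \<in> quot_set G S1 \<Longrightarrow> b \<in> quot_set G S2 \<Longrightarrow> a \<otimes> b = \<one> \<Longrightarrow> a = \<one>"
    and "a \<in> quot_set G S1 \<Longrightarrow> b \<in> quot_set G S3 \<Longrightarrow> a \<otimes> b = \<one> \<Longrightarrow> a = \<one>"
    and "a \<in> quot_set G S2 \<Longrightarrow> b \<in> quot_set G S3 \<Longrightarrow> a \<otimes> b = \<one> \<Longrightarrow> a = \<one>"
proof -
  have sub: "S1 \<subseteq> carrier G" "S2 \<subseteq> carrier G" "S3 \<subseteq> carrier G"
    and ne: "S1 \<noteq> {}" "S2 \<noteq> {}" "S3 \<noteq> {}"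
    and tpp: "\<forall>s1\<in>quot_set G S1. \<forall>s2\<in>quot_set G S2. \<forall>s3\<in>quot_set G S3.
        s1 \<otimes> s2 \<otimes> s3 = \<one> \<longleftrightarrow> s1 = \<one> \<and> s2 = \<one> \<and> s3 = \<one>"
    using assms unfolding TPP_def by auto
  have one: "\<one> \<in> quot_set G S1" "\<one> \<in> quot_set G S2" "\<one> \<in> quot_set G S3"
    using sub ne one_in_quot_set by blast+
  have trivial: "s1 = \<one> \<and> s2 = \<one> \<and> s3 = \<one>"
    if "s1 \<in> quot_set G S1" "s2 \<in> quot_set G S2" "s3 \<in> quot_set G S3" "s1 \<otimes> s2 \<otimes> s3 = \<one>"
    for s1 s2 s3
    using tpp that by blast
  have carrier: "a \<in> carrier G" if "a \<in> quot_set G S" "S \<subseteq> carrier G" for a S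
    using that quot_set_subset_carrier by blast
  show "a = \<one>" if "a \<in> quot_set G S1" "b \<in> quot_set G S2" "a \<otimes> b = \<one>"
    using trivial[OF that(1,2) one(3)] that carrier[OF that(1) sub(1)] by simp
  show "a = \<one>" if "a \<in> quot_set G S1" "b \<in> quot_set G S3" "a \<otimes> b = \<one>"
    using trivial[OF that(1) one(2) that(2)] that carrier[OF that(1) sub(1)] by simp
  show "a = \<one>" if "a \<in> quot_set G S2" "b \<in> quot_set G S3" "a \<otimes> b = \<one>"
    using trivial[OF one(1) that(1,2)] that carrier[OF that(1) sub(2)] by simp
qed

lemma (in group) card_mult_card_le_order:
  assumes fin: "finite (carrier G)" and sub: "A \<subseteq> carrier G" "B \<subseteq> carrier G"
    and trivial: "\<And>a b. a \<in> quot_set G A \<Longrightarrow> b \<in> quot_set G B \<Longrightarrow> a \<otimes> b = \<one> \<Longrightarrow> a = \<one>"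
  shows "card A * card B \<le> order G"
proof -
  have "inj_on (\<lambda>(a, b). inv a \<otimes> b) (A \<times> B)"
  proof (rule inj_onI, clarify)
    fix a b a' b' assume mem: "a \<in> A" "b \<in> B" "a' \<in> A" "b' \<in> B"
      and eq: "inv a \<otimes> b = inv a' \<otimes> b'"
    have carr: "a \<in> carrier G" "a' \<in> carrier G" "b \<in> carrier G" "b' \<in> carrier G"
      using mem sub by auto
    have "b = a \<otimes> (inv a' \<otimes> b')"
      using eq carr by (metis inv_closed inv_solve_left m_closed)
    then have "b \<otimes> inv b' = a \<otimes> inv a'"
      using carr by (simp add: m_assoc)
    then have "(a' \<otimes> inv a) \<otimes> (b \<otimes> inv b') = \<one>" \<comment> \<open>both factors lie in the quotient sets\<close>
      using carr by (simp add: m_assoc[symmetric]) (simp add: m_assoc)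
    then have "a' \<otimes> inv a = \<one>"
      using trivial[OF quot_setI[OF mem(3,1)] quot_setI[OF mem(2,4)]] by blast
    then have "a = a'"
      using inv_equality[of a' "inv a"] carr by simp
    with eq carr show "a = a' \<and> b = b'" by simp
  qed
  then have "card (A \<times> B) \<le> card (carrier G)"
    using sub fin by (intro card_inj_on_le) auto
  then show ?thesis by (simp add: card_cartesian_product order_def)
qed

lemma (in group) TPP_card_mult_le_order:
  assumes "finite (carrier G)" "TPP G S1 S2 S3"
  shows "card S1 * card S2 \<le> order G" "card S1 * card S3 \<le> order G" "card S2 * card S3 \<le> order G"
proof -
  have sub: "S1 \<subseteq> carrier G" "S2 \<subseteq> carrier G" "S3 \<subseteq> carrier G"
    using assms(2) unfolding TPP_def by auto
  show "card S1 * card S2 \<le> order G"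
    using card_mult_card_le_order[OF assms(1) sub(1,2)] TPP_pair_trivial(1)[OF assms(2)] by blast
  show "card S1 * card S3 \<le> order G"
    using card_mult_card_le_order[OF assms(1) sub(1,3)] TPP_pair_trivial(2)[OF assms(2)] by blast
  show "card S2 * card S3 \<le> order G"
    using card_mult_card_le_order[OF assms(1) sub(2,3)] TPP_pair_trivial(3)[OF assms(2)] by blast
qed

lemma (in group) subgroups_inter_trivial:
  assumes "subgroup H G" "subgroup K G"
    and trivial: "\<And>a b. a \<in> quot_set G H \<Longrightarrow> b \<in> quot_set G K \<Longrightarrow> a \<otimes> b = \<one> \<Longrightarrow> a = \<one>"
  shows "H \<inter> K = {\<one>}"
proof -
  have "h = \<one>" if "h \<in> H" "h \<in> K" for h
  proof (rule trivial)
    show "h \<in> quot_set G H"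
      using that(1) subgroup_subset_quot_set[OF assms(1)] by blast
    show "inv h \<in> quot_set G K"
      using subgroup.m_inv_closed[OF assms(2) that(2)] subgroup_subset_quot_set[OF assms(2)] by blast
    show "h \<otimes> inv h = \<one>"
      using that(1) subgroup.mem_carrier[OF assms(1)] by simp
  qed
  then show ?thesis
    using assms(1,2) subgroup.one_closed by blast
qed

lemma (in group) TPP_subgroups_inter_trivial:
  assumes "TPP G H1 H2 H3" "subgroup H1 G" "subgroup H2 G" "subgroup H3 G"
  shows "H1 \<inter> H2 = {\<one>}" "H1 \<inter> H3 = {\<one>}" "H2 \<inter> H3 = {\<one>}"
proof -
  show "H1 \<inter> H2 = {\<one>}"
    using assms(2,3) TPP_pair_trivial(1)[OF assms(1)] by (rule subgroups_inter_trivial)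
  show "H1 \<inter> H3 = {\<one>}"
    using assms(2,4) TPP_pair_trivial(2)[OF assms(1)] by (rule subgroups_inter_trivial)
  show "H2 \<inter> H3 = {\<one>}"
    using assms(3,4) TPP_pair_trivial(3)[OF assms(1)] by (rule subgroups_inter_trivial)
qed

lemma realizes_mult_le:
  assumes "realizes G n p m" "finite (carrier G)"
  shows "n * p * m \<le> order G ^ 3"
proof -
  obtain S1 S2 S3 where T: "TPP G S1 S2 S3" and card: "card S1 = n" "card S2 = p" "card S3 = m"
    using assms(1) unfolding realizes_def by blast
  have "S1 \<subseteq> carrier G" "S2 \<subseteq> carrier G" "S3 \<subseteq> carrier G"
    using T unfolding TPP_def by auto
  then have "n \<le> order G" "p \<le> order G" "m \<le> order G"
    using card card_mono[OF assms(2)] unfolding order_def by blast+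
  then show ?thesis
    by (simp add: mult_le_mono power3_eq_cube)
qed

lemma finite_realizable_products:
  assumes "finite (carrier G)"
  shows "finite {n * p * m | n p m. realizes G n p m}"
  by (rule finite_subset[of _ "{..order G ^ 3}"]) (auto dest: realizes_mult_le[OF _ assms])

lemma realizes_le_TPP_capacity:
  assumes "finite (carrier G)" "realizes G n p m"
  shows "n * p * m \<le> TPP_capacity G"
  unfolding TPP_capacity_def using assms finite_realizable_products by (blast intro: Max_ge)

lemma realizes_subgroups_imp_realizes: "realizes_subgroups G n p m \<Longrightarrow> realizes G n p m"
  unfolding realizes_subgroups_def realizes_def by blast

lemma (in group) realizes_subgroups_1_1_1: "realizes_subgroups G 1 1 1"
proof -
  have "quot_set G {\<one>} = {\<one>}"
    unfolding quot_set_def by auto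
  then have "TPP G {\<one>} {\<one>} {\<one>}"
    unfolding TPP_def by auto
  then show ?thesis
    unfolding realizes_subgroups_def using triv_subgroup by fastforce
qed

lemma (in group) TPP_subgroup_capacity_le:
  assumes "finite (carrier G)" "\<And>n p m. realizes_subgroups G n p m \<Longrightarrow> n * p * m \<le> k"
  shows "TPP_subgroup_capacity G \<le> k"
proof -
  have "finite {n * p * m | n p m. realizes_subgroups G n p m}"
    by (rule finite_subset[OF _ finite_realizable_products[OF assms(1)]])
      (auto dest: realizes_subgroups_imp_realizes)
  moreover have "{n * p * m | n p m. realizes_subgroups G n p m} \<noteq> {}"
    using realizes_subgroups_1_1_1 by blast
  ultimately show ?thesis
    unfolding TPP_subgroup_capacity_def using assms(2) by (auto intro: Max.boundedI)
qed

lemma (in group) TPP_subgroup_capacity_le_TPP_capacity: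
  assumes "finite (carrier G)"
  shows "TPP_subgroup_capacity G \<le> TPP_capacity G"
  using assms realizes_le_TPP_capacity realizes_subgroups_imp_realizes
  by (blast intro: TPP_subgroup_capacity_le)

text \<open>The pair \<open>(a, b) \<in> \<int>\<^sub>3 \<times> \<int>\<^sub>4\<close> is encoded as \<open>a + 3 b\<close>, with product
  \<open>(a, b) (c, d) = (a + (-1)\<^sup>b c, b + d)\<close>; \<open>dic3_twist\<close> is \<open>(-1)\<^sup>b\<close> written as 1 or \<open>2 \<equiv> -1 (mod 3)\<close>.\<close>

definition dic3_twist :: "nat \<Rightarrow> nat" where
  "dic3_twist x = (if even (x div 3) then 1 else 2)"

definition dic3_mult :: "nat \<Rightarrow> nat \<Rightarrow> nat" where
  "dic3_mult x y = (x + dic3_twist x * y) mod 3 + 3 * ((x div 3 + y div 3) mod 4)"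

definition dic3_inv :: "nat \<Rightarrow> nat" where
  "dic3_inv x = (if even (x div 3) then 2 * x else x) mod 3 + 3 * ((4 - x div 3) mod 4)"

definition Dic3 :: "nat monoid" where
  "Dic3 = \<lparr>carrier = {..<12}, mult = dic3_mult, one = 0\<rparr>"

lemma dic3_mult_mod3: "dic3_mult x y mod 3 = (x + dic3_twist x * y) mod 3"
  unfolding dic3_mult_def by simp

lemma dic3_mult_div3: "dic3_mult x y div 3 = (x div 3 + y div 3) mod 4"
  unfolding dic3_mult_def by simp

lemma dic3_mult_less: "dic3_mult x y < 12"
  unfolding dic3_mult_def by simp

lemma dic3_twist_mult: "dic3_twist (dic3_mult x y) mod 3 = dic3_twist x * dic3_twist y mod 3"
  unfolding dic3_twist_def dic3_mult_div3 by (simp add: even_add dvd_mod_iff[of 2 4])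

lemma dic3_mult_assoc: "dic3_mult (dic3_mult x y) z = dic3_mult x (dic3_mult y z)"
proof -
  have "dic3_mult (dic3_mult x y) z mod 3 = (dic3_mult x y + dic3_twist (dic3_mult x y) * z) mod 3"
    by (rule dic3_mult_mod3)
  also have "\<dots> = (x + dic3_twist x * y + dic3_twist x * dic3_twist y * z) mod 3"
    by (rule mod_add_cong[OF dic3_mult_mod3 mod_mult_cong[OF dic3_twist_mult refl]])
  also have "\<dots> = (x + dic3_twist x * (y + dic3_twist y * z)) mod 3"
    by (simp add: algebra_simps)
  also have "\<dots> = (x + dic3_twist x * dic3_mult y z) mod 3"
    by (rule mod_add_cong[OF refl mod_mult_cong[OF refl dic3_mult_mod3[symmetric]]])
  also have "\<dots> = dic3_mult x (dic3_mult y z) mod 3"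
    by (rule dic3_mult_mod3[symmetric])
  finally have "dic3_mult (dic3_mult x y) z mod 3 = dic3_mult x (dic3_mult y z) mod 3" .
  moreover have "dic3_mult (dic3_mult x y) z div 3 = dic3_mult x (dic3_mult y z) div 3"
    by (simp add: dic3_mult_div3 mod_add_left_eq mod_add_right_eq add.assoc)
  ultimately show ?thesis
    by (metis div_mult_mod_eq)
qed

lemma dic3_mult_0_left: "x < 12 \<Longrightarrow> dic3_mult 0 x = x"
  unfolding dic3_mult_def dic3_twist_def by simp

lemma dic3_inv_less: "dic3_inv x < 12"
  unfolding dic3_inv_def by simp

lemma dic3_mult_inv_left: "x < 12 \<Longrightarrow> dic3_mult (dic3_inv x) x = 0"
  using lessThan_iff[of x 12]
  by (auto simp: lessThan_nat_numeral dic3_mult_def dic3_twist_def dic3_inv_def)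

lemma Dic3_simps [simp]:
  "carrier Dic3 = {..<12}" "x \<otimes>\<^bsub>Dic3\<^esub> y = dic3_mult x y" "\<one>\<^bsub>Dic3\<^esub> = 0"
  unfolding Dic3_def by simp_all

lemma group_Dic3: "group Dic3"
  by (rule groupI)
    (auto simp: dic3_mult_less dic3_mult_assoc dic3_mult_0_left
      intro!: bexI[of _ "dic3_inv _"] dic3_inv_less dic3_mult_inv_left)

lemma Dic3_inv: "x < 12 \<Longrightarrow> inv\<^bsub>Dic3\<^esub> x = dic3_inv x"
  by (rule group.inv_equality[OF group_Dic3]) (simp_all add: dic3_mult_inv_left dic3_inv_less)

lemma TPP_Dic3_witness: "TPP Dic3 {0, 3} {0, 4} {0, 5, 6, 11}"
proof -
  have "quot_set Dic3 {0, 3} = {0, 3, 9}" "quot_set Dic3 {0, 4} = {0, 4, 10}"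
    "quot_set Dic3 {0, 5, 6, 11} = {0, 5, 6, 11}"
    by (simp_all add: quot_set_eq_image Dic3_inv dic3_inv_def dic3_mult_def dic3_twist_def
        insert_commute)
  then show ?thesis
    unfolding TPP_def by (simp add: dic3_mult_def dic3_twist_def)
qed

lemma Dic3_realizes_2_2_4: "realizes Dic3 2 2 4"
  using TPP_Dic3_witness unfolding realizes_def by fastforce

text \<open>Every element \<open>h \<noteq> 0\<close> either lies in \<open>{1, 2}\<close> (order 3), or one of \<open>h, h\<^sup>2, h\<^sup>3\<close> is the
  involution 6.\<close>

lemma Dic3_nontrivial_subgroup:
  assumes "subgroup H Dic3" "1 < card H"
  shows "6 \<in> H \<or> 1 \<in> H"
proof -
  have "finite H"
    using subgroup.subset[OF assms(1)] finite_subset by auto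
  then obtain h where "h \<in> H" "h \<noteq> 0"
    using assms(2) card_le_Suc0_iff_eq[of H] by (metis One_nat_def not_le)
  have "h < 12"
    using subgroup.subset[OF assms(1)] \<open>h \<in> H\<close> by auto
  moreover have "dic3_mult h h \<in> H" "dic3_mult (dic3_mult h h) h \<in> H"
    using subgroup.m_closed[OF assms(1)] \<open>h \<in> H\<close> by simp_all
  ultimately show ?thesis
    using \<open>h \<in> H\<close> \<open>h \<noteq> 0\<close> lessThan_iff[of h 12]
    by (auto simp: lessThan_nat_numeral dic3_mult_def dic3_twist_def)
qed

lemma Dic3_realizes_subgroups_le_12:
  assumes "realizes_subgroups Dic3 n p m"
  shows "n * p * m \<le> 12"
proof -
  interpret group Dic3
    by (rule group_Dic3)
  obtain H1 H2 H3 where T: "TPP Dic3 H1 H2 H3"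
    and sub: "subgroup H1 Dic3" "subgroup H2 Dic3" "subgroup H3 Dic3"
    and card: "card H1 = n" "card H2 = p" "card H3 = m"
    using assms unfolding realizes_subgroups_def by blast
  have "finite (carrier Dic3)" "order Dic3 = 12"
    by (simp_all add: order_def)
  then have pairs: "n * p \<le> 12" "n * m \<le> 12" "p * m \<le> 12"
    using TPP_card_mult_le_order[OF _ T] card by simp_all
  show ?thesis
  proof (cases "n \<le> 1 \<or> p \<le> 1 \<or> m \<le> 1")
    case True
    with pairs show ?thesis
      by (auto simp: le_Suc_eq)
  next
    case False
    then have "6 \<in> H1 \<or> 1 \<in> H1" "6 \<in> H2 \<or> 1 \<in> H2" "6 \<in> H3 \<or> 1 \<in> H3"
      using Dic3_nontrivial_subgroup[OF sub(1)] Dic3_nontrivial_subgroup[OF sub(2)]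
        Dic3_nontrivial_subgroup[OF sub(3)] card by simp_all
    moreover have "x = 0" if "x \<in> H1 \<inter> H2 \<or> x \<in> H1 \<inter> H3 \<or> x \<in> H2 \<inter> H3" for x
      using that TPP_subgroups_inter_trivial[OF T sub] by auto
    ultimately show ?thesis
      by (metis Int_iff zero_neq_numeral zero_neq_one)
  qed
qed

theorem mainTheorem6:
  shows "(\<forall>G :: ('a, 'b) monoid_scheme.
            group G \<and> finite (carrier G) \<and> carrier G \<noteq> {\<one>\<^bsub>G\<^esub>} \<longrightarrow>
              TPP_subgroup_capacity G \<le> TPP_capacity G)
       \<and> (\<exists>G :: nat monoid. group G \<and> finite (carrier G) \<and> carrier G \<noteq> {\<one>\<^bsub>G\<^esub>} \<and>
              TPP_subgroup_capacity G < TPP_capacity G)"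
proof
  show "\<forall>G :: ('a, 'b) monoid_scheme.
          group G \<and> finite (carrier G) \<and> carrier G \<noteq> {\<one>\<^bsub>G\<^esub>} \<longrightarrow>
            TPP_subgroup_capacity G \<le> TPP_capacity G"
    using group.TPP_subgroup_capacity_le_TPP_capacity by blast
  have "TPP_subgroup_capacity Dic3 \<le> 12"
    by (rule group.TPP_subgroup_capacity_le[OF group_Dic3])
      (simp_all add: Dic3_realizes_subgroups_le_12)
  moreover have "16 \<le> TPP_capacity Dic3"
    using realizes_le_TPP_capacity[OF _ Dic3_realizes_2_2_4] by simp
  moreover have "carrier Dic3 \<noteq> {\<one>\<^bsub>Dic3\<^esub>}"
    using lessThan_iff[of 1 12] by force
  ultimately show "\<exists>G :: nat monoid. group G \<and> finite (carrier G) \<and> carrier G \<noteq> {\<one>\<^bsub>G\<^esub>} \<and>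
                     TPP_subgroup_capacity G < TPP_capacity G"
    using group_Dic3 by (intro exI[of _ Dic3]) simp
qed

end
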